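(* Let $k=\mathbb{F}_q$ with $q=2^m\geq 4$ and let $n\geq 1$. Then every element of $\mathrm{PGL}_{n+1}(k)$ induces an even permutation of $\mathbb{P}^n(k)$. *)

theory Defs
  imports "HOL-Analysis.Analysis" "HOL-Combinatorics.Permutations"
begin

text \<open>Projective space P(V) for V = k^{n+1}, the index type 'n having n+1 elements:
  points are the lines through the origin, i.e. classes of nonzero vectors under
  nonzero scalar multiplication.\<close>

definition proj_class :: "'a::field ^ 'n \<Rightarrow> ('a ^ 'n) set" where
  "proj_class x = {c *s x | c. c \<noteq> 0}"

definition proj_space :: "('a::field ^ 'n) set set" where
  "proj_space = {proj_class x | x. x \<noteq> 0}"

definition proj_map :: "'a::field ^ 'n ^ 'n \<Rightarrow> ('a ^ 'n) set \<Rightarrow> ('a ^ 'n) set" where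
  "proj_map A C = (if C \<in> proj_space then (\<lambda>x. A *v x) ` C else C)"

end

theory Submission
  imports Defs "HOL-Combinatorics.Cycles"
begin

text \<open>
  Since \<open>A \<mapsto> proj_map A\<close> is multiplicative on invertible matrices and Gaussian elimination
  writes every invertible matrix as a product of transvections and invertible diagonal matrices,
  it suffices to treat these two kinds of generators.
  A diagonal matrix \<open>D\<close> over \<open>\<bbbF>\<^sub>q\<close> satisfies \<open>D\<^bsup>q - 1\<^esup> = 1\<close>; as \<open>q - 1\<close> is odd, the
  permutation induced by \<open>D\<close> is even.
  For \<open>q > 2\<close> pick \<open>\<lambda> \<notin> {0, 1}\<close>: conjugating the transvection \<open>T(b)\<close> by
  \<open>D = diag(\<lambda>, 1, \<dots>, 1)\<close> gives \<open>T(\<lambda> b)\<close>, so \<open>T(c) = D T(b) D\<^sup>-\<^sup>1 T(b)\<^sup>-\<^sup>1\<close> with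
  \<open>b = c / (\<lambda> - 1)\<close>, and commutators always induce even permutations.
\<close>

lemma evenperm_if_funpow_odd_eq_id:
  assumes "permutation p" and "p ^^ k = id" and "odd k"
  shows "evenperm p"
proof -
  have "evenperm (p ^^ j) \<longleftrightarrow> even j \<or> evenperm p" for j
  proof (induction j)
    case (Suc j)
    have "evenperm (p ^^ Suc j) \<longleftrightarrow> evenperm p = evenperm (p ^^ j)"
      using evenperm_comp [OF assms(1) permutation_funpow [OF assms(1)]]
      by (simp only: funpow.simps)
    then show ?case
      using Suc.IH by (auto simp del: funpow.simps)
  qed simp
  from this [of k] show ?thesis
    using assms(2,3) by simp
qed

lemma evenperm_commutator:
  assumes "permutation p" "permutation q" "permutation p'" "permutation q'"
    and "p \<circ> p' = id" "q \<circ> q' = id"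
  shows "evenperm (p \<circ> q \<circ> p' \<circ> q')"
proof -
  have "evenperm p = evenperm p'" "evenperm q = evenperm q'"
    using evenperm_comp [OF assms(1,3)] evenperm_comp [OF assms(2,4)] assms(5,6) by simp_all
  then show ?thesis
    using assms(1-4) by (simp add: evenperm_comp permutation_compose) blast
qed

lemma power_card_minus_one_eq_one:
  fixes x :: "'a::{field, finite}"
  assumes "x \<noteq> 0"
  shows "x ^ (CARD('a) - 1) = 1"
proof -
  have "x ^ card (UNIV - {0 :: 'a}) * (\<Prod>y\<in>UNIV - {0}. y) = (\<Prod>y\<in>UNIV - {0}. x * y)"
    by (simp add: prod.distrib)
  also have "\<dots> = (\<Prod>y\<in>UNIV - {0}. y)"
    by (rule prod.reindex_bij_witness [of _ "\<lambda>y. y / x" "\<lambda>y. x * y"]) (use assms in auto)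
  finally show ?thesis
    by (simp add: card_Diff_singleton)
qed

lemma sum_UNIV_two_points:
  fixes f :: "'n::finite \<Rightarrow> 'a::comm_monoid_add"
  assumes "a \<noteq> b" and "\<And>x. x \<noteq> a \<Longrightarrow> x \<noteq> b \<Longrightarrow> f x = 0"
  shows "(\<Sum>x\<in>UNIV. f x) = f a + f b"
proof -
  have "(\<Sum>x\<in>UNIV. f x) = (\<Sum>x\<in>{a, b}. f x)"
    using assms(2) by (intro sum.mono_neutral_right) auto
  then show ?thesis
    using assms(1) by simp
qed

definition diagonal_matrix :: "('n \<Rightarrow> 'a::zero) \<Rightarrow> 'a^'n^'n" where
  "diagonal_matrix d = (\<chi> i j. if i = j then d i else 0)"

definition transvection :: "'n \<Rightarrow> 'n \<Rightarrow> 'a::zero_neq_one \<Rightarrow> 'a^'n^'n" where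
  "transvection i j c = (\<chi> a b. if a = i \<and> b = j then c else of_bool (a = b))"

definition elimination_matrix :: "'n \<Rightarrow> ('n \<Rightarrow> 'a::zero_neq_one) \<Rightarrow> 'a^'n^'n" where
  "elimination_matrix k v = (\<chi> a b. if b = k \<and> a \<noteq> k then v a else of_bool (a = b))"

lemma diagonal_matrix_mult_entry:
  "(diagonal_matrix d ** A) $ a $ b = d a * A $ a $ b"
  by (simp add: matrix_matrix_mult_def diagonal_matrix_def if_distrib [of "\<lambda>x. x * y" for y]
      cong: if_cong)

lemma matrix_mult_diagonal_matrix_entry:
  "(A ** diagonal_matrix d) $ a $ b = A $ a $ b * d b"
  by (simp add: matrix_matrix_mult_def diagonal_matrix_def if_distrib [of "\<lambda>x. y * x" for y]
      cong: if_cong)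

lemma diagonal_matrix_mult:
  "diagonal_matrix d ** diagonal_matrix e = diagonal_matrix (\<lambda>i. d i * e i)"
  by (simp add: vec_eq_iff diagonal_matrix_mult_entry) (simp add: diagonal_matrix_def)

lemma diagonal_matrix_one: "diagonal_matrix (\<lambda>_. 1) = mat 1"
  by (simp add: diagonal_matrix_def mat_def)

lemma invertible_diagonal_matrix:
  fixes d :: "'n::finite \<Rightarrow> 'a::field"
  assumes "\<And>i. d i \<noteq> 0"
  shows "invertible (diagonal_matrix d)"
  unfolding invertible_def
  by (rule exI [of _ "diagonal_matrix (\<lambda>i. inverse (d i))"])
    (simp add: diagonal_matrix_mult assms diagonal_matrix_one)

lemma elimination_matrix_mult_entry:
  fixes A :: "'a::comm_ring_1^'n^'n"
  shows "(elimination_matrix k v ** A) $ a $ b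
    = (if a = k then A $ a $ b else A $ a $ b + v a * A $ k $ b)"
proof (cases "a = k")
  case True
  then show ?thesis
    by (simp add: matrix_matrix_mult_def elimination_matrix_def if_distrib [of "\<lambda>x. x * y" for y]
        cong: if_cong)
next
  case False
  then show ?thesis
    by (simp add: matrix_matrix_mult_def elimination_matrix_def sum_UNIV_two_points [of a k])
qed

lemma elimination_matrix_mult:
  fixes v w :: "'n::finite \<Rightarrow> 'a::comm_ring_1"
  shows "elimination_matrix k v ** elimination_matrix k w = elimination_matrix k (\<lambda>a. v a + w a)"
  by (auto simp: vec_eq_iff elimination_matrix_mult_entry) (auto simp: elimination_matrix_def)

lemma elimination_matrix_zero: "elimination_matrix k (\<lambda>_. 0) = mat 1"
  by (auto simp: vec_eq_iff elimination_matrix_def mat_def)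

lemma invertible_elimination_matrix:
  fixes v :: "'n::finite \<Rightarrow> 'a::comm_ring_1"
  shows "invertible (elimination_matrix k v)"
  unfolding invertible_def
  by (rule exI [of _ "elimination_matrix k (\<lambda>a. - v a)"])
    (simp add: elimination_matrix_mult elimination_matrix_zero)

lemma elimination_matrix_single_row:
  "elimination_matrix k (\<lambda>a. if a = i then c else 0) = (if i = k then mat 1 else transvection i k c)"
  by (auto simp: vec_eq_iff elimination_matrix_def transvection_def mat_def)

lemma matrix_mult_transvection_entry:
  fixes A :: "'a::comm_ring_1^'n^'n"
  assumes "i \<noteq> j"
  shows "(A ** transvection i j c) $ a $ b
    = (if b = j then A $ a $ j + c * A $ a $ i else A $ a $ b)"
proof (cases "b = j")
  case True
  then show ?thesis
    using assms
    by (simp add: matrix_matrix_mult_def transvection_def sum_UNIV_two_points [of j i] mult.commute)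
next
  case False
  then show ?thesis
    by (simp add: matrix_matrix_mult_def transvection_def if_distrib [of "\<lambda>x. y * x" for y]
        cong: if_cong)
qed

lemma transvection_mult:
  fixes b c :: "'a::comm_ring_1"
  assumes "i \<noteq> j"
  shows "transvection i j b ** transvection i j c = transvection i j (b + c)"
  using elimination_matrix_mult [of j "\<lambda>a. if a = i then b else 0" "\<lambda>a. if a = i then c else 0"]
    assms
  by (simp add: elimination_matrix_single_row if_distrib [of "\<lambda>x. x + y" for y] cong: if_cong)

lemma transvection_zero: "i \<noteq> j \<Longrightarrow> transvection i j 0 = mat 1"
  by (auto simp: vec_eq_iff transvection_def mat_def)

lemma invertible_transvection:
  fixes c :: "'a::comm_ring_1"
  assumes "i \<noteq> j"
  shows "invertible (transvection i j c :: 'a^'n::finite^'n)"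
  using invertible_elimination_matrix [of j "\<lambda>a. if a = i then c else 0"] assms
  by (simp add: elimination_matrix_single_row)

lemma diagonal_matrix_conj_transvection:
  fixes d :: "'n::finite \<Rightarrow> 'a::field"
  assumes "\<And>a. d a \<noteq> 0"
  shows "diagonal_matrix d ** transvection i j c ** diagonal_matrix (\<lambda>a. inverse (d a))
    = transvection i j (d i * c / d j)"
  using assms by (auto simp: vec_eq_iff matrix_mult_diagonal_matrix_entry diagonal_matrix_mult_entry
      transvection_def divide_inverse)

lemma elimination_matrix_induct:
  fixes P :: "'a::field^'n::finite^'n \<Rightarrow> bool"
  assumes mult: "\<And>A B. P A \<Longrightarrow> P B \<Longrightarrow> P (A ** B)"
    and one: "P (mat 1)"
    and transvection: "\<And>i j c. i \<noteq> j \<Longrightarrow> P (transvection i j c)"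
  shows "P (elimination_matrix k v)"
proof -
  have "P (elimination_matrix k v)" if "\<And>a. a \<notin> S \<Longrightarrow> v a = 0" for S v
    using finite [of S] that
  proof (induction S arbitrary: v rule: finite_induct)
    case empty
    then have "v = (\<lambda>_. 0)"
      by auto
    then show ?case
      by (simp add: elimination_matrix_zero one)
  next
    case (insert s S)
    let ?w = "v(s := 0)"
    have "(\<lambda>a. ?w a + (if a = s then v s else 0)) = v"
      by auto
    then have "elimination_matrix k v
        = elimination_matrix k ?w ** elimination_matrix k (\<lambda>a. if a = s then v s else 0)"
      by (simp only: elimination_matrix_mult)
    moreover have "P (elimination_matrix k ?w)"
      using insert by (intro insert.IH) auto
    moreover have "P (elimination_matrix k (\<lambda>a. if a = s then v s else 0))"
      by (simp add: elimination_matrix_single_row one transvection)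
    ultimately show ?case
      by (simp add: mult)
  qed
  then show ?thesis
    by blast
qed

lemma invertible_matrix_induct [consumes 1, case_names mult diagonal transvection]:
  fixes A :: "'a::field^'n::finite^'n"
  assumes "invertible A"
    and mult: "\<And>A B. P A \<Longrightarrow> P B \<Longrightarrow> P (A ** B)"
    and diagonal: "\<And>d. (\<And>i. d i \<noteq> 0) \<Longrightarrow> P (diagonal_matrix d)"
    and transvection: "\<And>i j c. i \<noteq> j \<Longrightarrow> P (transvection i j c)"
  shows "P A"
proof -
  have one: "P (mat 1)"
    using diagonal [of "\<lambda>_. 1"] by (simp add: diagonal_matrix_one)
  have elimination: "P (elimination_matrix k v)" for k v
    using mult one transvection by (rule elimination_matrix_induct)
  \<comment> \<open>Gaussian elimination column by column; \<open>K\<close> holds the columns still to be cleared.\<close>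
  define diagonal_outside where "diagonal_outside K B \<longleftrightarrow>
    (\<forall>i j. j \<notin> K \<longrightarrow> i \<noteq> j \<longrightarrow> B $ i $ j = 0)" for K and B :: "'a^'n^'n"
  have "P B" if "invertible B" and "diagonal_outside K B" for K B
    using finite [of K] that
  proof (induction K arbitrary: B rule: finite_induct)
    case empty
    then have "B = diagonal_matrix (\<lambda>i. B $ i $ i)"
      by (auto simp: vec_eq_iff diagonal_matrix_def diagonal_outside_def)
    moreover have "B $ i $ i \<noteq> 0" for i
      using empty det_diagonal [of B] by (auto simp: diagonal_outside_def invertible_det_nz)
    ultimately show ?case
      using diagonal [of "\<lambda>i. B $ i $ i"] by simp
  next
    case (insert k K)
    have with_pivot: "P B"
      if "invertible B" and "diagonal_outside (insert k K) B" and "B $ k $ k \<noteq> 0" for B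
    proof -
      define v where "v a = B $ a $ k / B $ k $ k" for a
      let ?B' = "elimination_matrix k (\<lambda>a. - v a) ** B"
      have "P ?B'"
      proof (rule insert.IH)
        show "invertible ?B'"
          using that(1) by (simp add: invertible_mult invertible_elimination_matrix)
        show "diagonal_outside K ?B'"
          unfolding diagonal_outside_def
        proof (intro allI impI)
          fix i j
          assume "j \<notin> K" and "i \<noteq> j"
          show "?B' $ i $ j = 0"
          proof (cases "j = k")
            case True
            then show ?thesis
              using that(3) \<open>i \<noteq> j\<close> by (simp add: elimination_matrix_mult_entry v_def)
          next
            case False
            then have "B $ i $ j = 0" and "B $ k $ j = 0"
              using that(2) \<open>j \<notin> K\<close> \<open>i \<noteq> j\<close> by (auto simp: diagonal_outside_def)
            then show ?thesis
              by (simp add: elimination_matrix_mult_entry)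
          qed
        qed
      qed
      then have "P (elimination_matrix k v ** ?B')"
        by (rule mult [OF elimination])
      also have "elimination_matrix k v ** ?B' = B"
        by (simp add: matrix_mul_assoc elimination_matrix_mult elimination_matrix_zero)
      finally show ?thesis .
    qed
    show ?case
    proof (cases "B $ k $ k = 0")
      case True
      have "row k B \<noteq> 0"
        using insert.prems(1) by (auto simp: invertible_det_nz det_zero_row)
      then obtain l where "B $ k $ l \<noteq> 0"
        by (auto simp: row_def vec_eq_iff)
      with True have "l \<noteq> k"
        by auto
      let ?B' = "B ** transvection l k 1"
      have "P ?B'"
      proof (rule with_pivot)
        show "invertible ?B'"
          using insert.prems(1) \<open>l \<noteq> k\<close> by (simp add: invertible_mult invertible_transvection)
        show "diagonal_outside (insert k K) ?B'"
          using insert.prems(2) \<open>l \<noteq> k\<close>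
          by (simp add: diagonal_outside_def matrix_mult_transvection_entry)
        show "?B' $ k $ k \<noteq> 0"
          using True \<open>B $ k $ l \<noteq> 0\<close> \<open>l \<noteq> k\<close> by (simp add: matrix_mult_transvection_entry)
      qed
      then have "P (?B' ** transvection l k (-1))"
        by (rule mult [OF _ transvection [OF \<open>l \<noteq> k\<close>]])
      also have "?B' ** transvection l k (-1) = B"
        using \<open>l \<noteq> k\<close> by (simp add: matrix_mul_assoc [symmetric] transvection_mult transvection_zero)
      finally show ?thesis .
    qed (use with_pivot insert.prems in blast)
  qed
  from this [where K = UNIV] show ?thesis
    using assms(1) by (simp add: diagonal_outside_def)
qed

lemma image_proj_class:
  fixes A :: "'a::field^'n^'m"
  shows "(\<lambda>y. A *v y) ` proj_class x = proj_class (A *v x)"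
  unfolding proj_class_def by (force simp: vector_scalar_commute)

lemma proj_class_in_proj_space: "x \<noteq> 0 \<Longrightarrow> proj_class x \<in> proj_space"
  unfolding proj_space_def by blast

lemma proj_map_proj_class:
  "x \<noteq> 0 \<Longrightarrow> proj_map A (proj_class x) = proj_class (A *v x)"
  by (simp add: proj_map_def proj_class_in_proj_space image_proj_class)

lemma invertible_mult_vector_nonzero:
  fixes A :: "'a::field^'n^'n"
  assumes "invertible A" and "x \<noteq> 0"
  shows "A *v x \<noteq> 0"
  using inj_matrix_vector_mult [OF assms(1)] assms(2) by (metis injD matrix_vector_mult_0_right)

lemma proj_map_mult:
  fixes A B :: "'a::field^'n^'n"
  assumes "invertible B"
  shows "proj_map (A ** B) = proj_map A \<circ> proj_map B"
proof
  fix C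
  show "proj_map (A ** B) C = (proj_map A \<circ> proj_map B) C"
  proof (cases "C \<in> proj_space")
    case True
    then obtain x where "x \<noteq> 0" and "C = proj_class x"
      unfolding proj_space_def by blast
    then show ?thesis
      using invertible_mult_vector_nonzero [OF assms]
      by (simp add: proj_map_proj_class matrix_vector_mul_assoc)
  qed (simp add: proj_map_def)
qed

lemma proj_map_mat_1: "proj_map (mat 1) = id"
  by (rule ext) (simp add: proj_map_def)

lemma permutation_proj_map:
  fixes A :: "'a::{field, finite}^'n^'n"
  assumes "invertible A"
  shows "permutation (proj_map A)"
proof -
  obtain A' where "A ** A' = mat 1" and "A' ** A = mat 1"
    using assms unfolding invertible_def by blast
  moreover have "invertible A'"
    using calculation unfolding invertible_def by blast
  ultimately have "proj_map A \<circ> proj_map A' = id" and "proj_map A' \<circ> proj_map A = id"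
    using assms by (metis proj_map_mult proj_map_mat_1)+
  then have "bij (proj_map A)"
    using o_bij by blast
  then show ?thesis
    by (simp add: permutation)
qed

lemma proj_map_diagonal_matrix_funpow:
  fixes d :: "'n::finite \<Rightarrow> 'a::field"
  assumes "\<And>i. d i \<noteq> 0"
  shows "proj_map (diagonal_matrix d) ^^ k = proj_map (diagonal_matrix (\<lambda>i. d i ^ k))"
proof (induction k)
  case 0
  show ?case
    by (simp add: diagonal_matrix_one proj_map_mat_1)
next
  case (Suc k)
  have "invertible (diagonal_matrix (\<lambda>i. d i ^ k))"
    using assms by (simp add: invertible_diagonal_matrix)
  then show ?case
    using Suc.IH by (simp add: proj_map_mult [symmetric] diagonal_matrix_mult)
qed

lemma evenperm_proj_map_diagonal_matrix:
  fixes d :: "'n::finite \<Rightarrow> 'a::{field, finite}"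
  assumes "even CARD('a)" and "\<And>i. d i \<noteq> 0"
  shows "evenperm (proj_map (diagonal_matrix d))"
proof (rule evenperm_if_funpow_odd_eq_id)
  show "permutation (proj_map (diagonal_matrix d))"
    using assms(2) by (simp add: permutation_proj_map invertible_diagonal_matrix)
  show "proj_map (diagonal_matrix d) ^^ (CARD('a) - 1) = id"
    using power_card_minus_one_eq_one [OF assms(2)]
    by (simp add: proj_map_diagonal_matrix_funpow [OF assms(2)] diagonal_matrix_one proj_map_mat_1)
  show "odd (CARD('a) - 1)"
    using assms(1) finite_UNIV_card_ge_0 [where 'a = 'a] by simp
qed

lemma evenperm_proj_map_commutator:
  fixes A B :: "'a::{field, finite}^'n::finite^'n"
  assumes "A ** A' = mat 1" and "B ** B' = mat 1"
  shows "evenperm (proj_map (A ** B ** A' ** B'))"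
proof -
  have invertible: "invertible A" "invertible B" "invertible A'" "invertible B'"
    using assms matrix_left_right_inverse unfolding invertible_def by blast+
  have "proj_map A \<circ> proj_map A' = id" "proj_map B \<circ> proj_map B' = id"
    using assms invertible by (simp_all add: proj_map_mult [symmetric] proj_map_mat_1)
  then have "evenperm (proj_map A \<circ> proj_map B \<circ> proj_map A' \<circ> proj_map B')"
    using invertible by (intro evenperm_commutator) (simp_all add: permutation_proj_map)
  then show ?thesis
    using invertible by (simp add: proj_map_mult invertible_mult)
qed

lemma evenperm_proj_map_transvection:
  fixes c :: "'a::{field, finite}"
  assumes "2 < CARD('a)" and "i \<noteq> j"
  shows "evenperm (proj_map (transvection i j c :: 'a^'n::finite^'n))"
proof -
  have "\<not> UNIV \<subseteq> {0, 1 :: 'a}"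
  proof
    assume "UNIV \<subseteq> {0, 1 :: 'a}"
    then have "CARD('a) \<le> card {0, 1 :: 'a}"
      by (intro card_mono) auto
    then show False
      using assms(1) by simp
  qed
  then obtain l :: 'a where "l \<noteq> 0" and "l \<noteq> 1"
    by blast
  define d where "d a = (if a = i then l else 1)" for a
  define b where "b = c / (l - 1)"
  have d_nonzero: "d a \<noteq> 0" for a
    using \<open>l \<noteq> 0\<close> by (simp add: d_def)
  have "diagonal_matrix d ** transvection i j b ** diagonal_matrix (\<lambda>a. inverse (d a))
      ** transvection i j (- b) = transvection i j (l * b) ** transvection i j (- b)"
    using assms(2) by (simp add: diagonal_matrix_conj_transvection d_nonzero) (simp add: d_def)
  also have "\<dots> = transvection i j c"
  proof -
    have "l * b + - b = c"
      using \<open>l \<noteq> 1\<close> by (simp add: b_def divide_simps) (simp add: algebra_simps)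
    then show ?thesis
      using assms(2) by (simp add: transvection_mult)
  qed
  finally have "transvection i j c = diagonal_matrix d ** transvection i j b
      ** diagonal_matrix (\<lambda>a. inverse (d a)) ** transvection i j (- b)" ..
  moreover have "diagonal_matrix d ** diagonal_matrix (\<lambda>a. inverse (d a)) = mat 1"
    by (simp add: diagonal_matrix_mult d_nonzero diagonal_matrix_one)
  moreover have "transvection i j b ** transvection i j (- b) = mat 1"
    using assms(2) by (simp add: transvection_mult transvection_zero)
  ultimately show ?thesis
    by (simp add: evenperm_proj_map_commutator)
qed

theorem proposition3p5:
  fixes A :: "'a::{field, finite} ^ 'n::finite ^ 'n"
  assumes "CARD('a) = 2 ^ m" and "m \<ge> 2"
    and "CARD('n) \<ge> 2"
    and "invertible A"
  shows "permutation (proj_map A) \<and> evenperm (proj_map A)"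
proof
  show "permutation (proj_map A)"
    using assms(4) by (rule permutation_proj_map)
  have "(4::nat) \<le> 2 ^ m"
    using power_increasing [OF assms(2), of "2::nat"] by simp
  then have "even CARD('a)" and "2 < CARD('a)"
    using assms(1,2) by simp_all
  have "invertible A \<and> evenperm (proj_map A)"
    using assms(4)
  proof (induction A rule: invertible_matrix_induct)
    case (mult A B)
    then have "invertible A" and "invertible B"
      by simp_all
    with mult have "evenperm (proj_map A \<circ> proj_map B)"
      by (simp add: evenperm_comp permutation_proj_map)
    then show ?case
      using \<open>invertible A\<close> \<open>invertible B\<close> by (metis proj_map_mult invertible_mult)
  next
    case (diagonal d)
    then show ?case
      by (simp add: invertible_diagonal_matrix evenperm_proj_map_diagonal_matrix \<open>even CARD('a)\<close>)
  next
    case (transvection i j c)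
    then show ?case
      by (simp add: invertible_transvection evenperm_proj_map_transvection \<open>2 < CARD('a)\<close>)
  qed
  then show "evenperm (proj_map A)" ..
qed

end
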